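(* Let $P$ be a hereditary property, let $(G,f)\in\mathcal C$ with $P(G,f)$, and let $W\subseteq V(G)$ be finite. Then there exists a finite $f$-factor $F$ of $G$ such that $P(G-F,\,f-d_F)$ holds, $d_F(x)=f(x)$ for every $x\in W$ with $f(x)<\aleph_0$, and $d_F(x)>0$ for every $x\in W$ with $f(x)\ge\aleph_0$.
   Context: A graph is $G=(V,E)$ with $V$ a nonempty set and $E\subseteq\{e\subseteq V:|e|=2\}$. For $F\subseteq E$ and $x\in V$, $d_F(x)$ is the cardinal $|\{e\in F:x\in e\}|$. For a function $f:V\to$ Cardinals, an $f$-factor of $G$ is a set $F\subseteq E$ with $d_F(x)\le f(x)$ for all $x\in V$; it is perfect if $d_F(x)=f(x)$ for all $x\in V$. $\mathcal C$ is the class of all pairs $(G,f)$ with $G=(V,E)$ a graph, $f:V\to$ Cardinals, and $f(x)\le d_E(x)$ for all $x\in V$. A property $P$ is a class of pairs; $P(G,f)$ means that $(G,f)\in\mathcal C$ and $(G,f)$ has property $P$. For $H\subseteq E$, $G-H=(V,E\setminus H)$; for $x,y\in V$, $G-\{x,y\}$ denotes $(V,E\setminus\{\{x,y\}\})$ (removal of the single edge $\{x,y\}$). For $x,y\in V$, $f_{x,y}(v)=f(v)-1$ if $v\in\{x,y\}$ and $1\le f(v)<\aleph_0$, and $f_{x,y}(v)=f(v)$ otherwise. $P$ is hereditary if for every $(G,f)$ with $P(G,f)$ and every $x\in V(G)$ with $f(x)>0$ there is $y\in V(G)$ with $f(y)>0$, $\{x,y\}\in E(G)$ and $P(G-\{x,y\},f_{x,y})$.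 For a finite $F\subseteq E$ with $d_F\le f$, $f-d_F$ is the function $x\mapsto f(x)-d_F(x)$ if $f(x)<\aleph_0$ and $x\mapsto f(x)$ if $f(x)\ge\aleph_0$. *)

theory Defs
  imports Main
begin

text \<open>Cardinal values. A value is either a finite cardinal (a natural number) or an
infinite cardinal, represented as the cardinality of an infinite set of type 'c.\<close>
datatype 'c cardv = Fin nat | Inf "'c set"

definition valid_cardv :: "'c cardv \<Rightarrow> bool" where
  "valid_cardv c = (case c of Fin n \<Rightarrow> True | Inf S \<Rightarrow> infinite S)"

definition is_fin :: "'c cardv \<Rightarrow> bool" where
  "is_fin c = (case c of Fin n \<Rightarrow> True | Inf S \<Rightarrow> False)"

definition pos :: "'c cardv \<Rightarrow> bool" where
  "pos c = (case c of Fin n \<Rightarrow> 0 < n | Inf S \<Rightarrow> True)"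

definition cv_le_set :: "'c cardv \<Rightarrow> 'b set \<Rightarrow> bool" where
  "cv_le_set c A = (case c of Fin n \<Rightarrow> (infinite A \<or> n \<le> card A)
                   | Inf S \<Rightarrow> (card_of S, card_of A) \<in> ordLeq)"

definition set_le_cv :: "'b set \<Rightarrow> 'c cardv \<Rightarrow> bool" where
  "set_le_cv A c = (case c of Fin n \<Rightarrow> (finite A \<and> card A \<le> n)
                   | Inf S \<Rightarrow> (card_of A, card_of S) \<in> ordLeq)"

definition set_eq_cv :: "'b set \<Rightarrow> 'c cardv \<Rightarrow> bool" where
  "set_eq_cv A c = (case c of Fin n \<Rightarrow> (finite A \<and> card A = n)
                   | Inf S \<Rightarrow> (card_of A, card_of S) \<in> ordIso)"

type_synonym 'a graph = "'a set \<times> 'a set set"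

definition graph :: "'a graph \<Rightarrow> bool" where
  "graph G = (fst G \<noteq> {} \<and> snd G \<subseteq> {e. e \<subseteq> fst G \<and> card e = 2})"

text \<open>The set of edges of F at x; d_F(x) is its cardinality.\<close>
definition inc :: "'a set set \<Rightarrow> 'a \<Rightarrow> 'a set set" where
  "inc F x = {e \<in> F. x \<in> e}"

definition inC :: "'a graph \<Rightarrow> ('a \<Rightarrow> 'c cardv) \<Rightarrow> bool" where
  "inC G f = (graph G \<and> (\<forall>x\<in>fst G. valid_cardv (f x) \<and> cv_le_set (f x) (inc (snd G) x)))"

definition holds :: "('a graph \<Rightarrow> ('a \<Rightarrow> 'c cardv) \<Rightarrow> bool) \<Rightarrow> 'a graph \<Rightarrow> ('a \<Rightarrow> 'c cardv) \<Rightarrow> bool" where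
  "holds P G f = (inC G f \<and> P G f)"

definition remove_edges :: "'a graph \<Rightarrow> 'a set set \<Rightarrow> 'a graph" where
  "remove_edges G H = (fst G, snd G - H)"

definition fxy :: "('a \<Rightarrow> 'c cardv) \<Rightarrow> 'a \<Rightarrow> 'a \<Rightarrow> ('a \<Rightarrow> 'c cardv)" where
  "fxy f x y = (\<lambda>v. if v \<in> {x, y} then (case f v of Fin n \<Rightarrow> Fin (n - 1) | Inf S \<Rightarrow> Inf S) else f v)"

definition hereditary :: "('a graph \<Rightarrow> ('a \<Rightarrow> 'c cardv) \<Rightarrow> bool) \<Rightarrow> bool" where
  "hereditary P = (\<forall>G f. holds P G f \<longrightarrow>
     (\<forall>x\<in>fst G. pos (f x) \<longrightarrow>
       (\<exists>y\<in>fst G. pos (f y) \<and> {x, y} \<in> snd G \<and>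
          holds P (remove_edges G {{x, y}}) (fxy f x y))))"

definition ffactor :: "'a graph \<Rightarrow> ('a \<Rightarrow> 'c cardv) \<Rightarrow> 'a set set \<Rightarrow> bool" where
  "ffactor G f F = (F \<subseteq> snd G \<and> (\<forall>x\<in>fst G. set_le_cv (inc F x) (f x)))"

definition fminus :: "('a \<Rightarrow> 'c cardv) \<Rightarrow> 'a set set \<Rightarrow> ('a \<Rightarrow> 'c cardv)" where
  "fminus f F = (\<lambda>v. case f v of Fin n \<Rightarrow> Fin (n - card (inc F v)) | Inf S \<Rightarrow> Inf S)"

end

theory Submission
  imports Defs
begin

text \<open>Grow F one edge at a time. As long as some x \<in> W still has positive residual
demand (f - d_F)(x), hereditarity of P applied to (G - F, f - d_F) yields an edge
{x, y} \<notin> F at a vertex y of positive residual demand such that P still holds after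
removing it; adding it to F keeps F an f-factor and strictly lowers the total
deficiency of W, which counts the missing degree of finite-demand vertices and one
missing edge for infinite-demand vertices not yet covered.\<close>

lemma inc_insert:
  "inc (insert e F) v = (if v \<in> e then insert e (inc F v) else inc F v)"
  unfolding inc_def by auto

lemma finite_inc: "finite F \<Longrightarrow> finite (inc F v)"
  unfolding inc_def by simp

lemma card_inc_insert:
  assumes "finite F" "e \<notin> F"
  shows "card (inc (insert e F) v) = (if v \<in> e then Suc (card (inc F v)) else card (inc F v))"
proof -
  have "e \<notin> inc F v" using assms(2) unfolding inc_def by simp
  then show ?thesis using finite_inc[OF assms(1)] by (simp add: inc_insert)
qed

lemma remove_edges_empty: "remove_edges G {} = G"
  unfolding remove_edges_def by simp

lemma remove_edges_insert:
  "remove_edges G (insert e F) = remove_edges (remove_edges G F) {e}"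
  unfolding remove_edges_def by auto

lemma fminus_empty: "fminus f {} = f"
  unfolding fminus_def inc_def by (auto split: cardv.split)

lemma fminus_insert:
  assumes "finite F" "{x, y} \<notin> F"
  shows "fminus f (insert {x, y} F) = fxy (fminus f F) x y"
  using card_inc_insert[OF assms]
  unfolding fminus_def fxy_def by (auto split: cardv.split)

lemma set_le_cv_Inf_if_finite:
  assumes "finite A" "infinite S"
  shows "set_le_cv A (Inf S)"
  using ordLess_imp_ordLeq[OF finite_ordLess_infinite[OF card_of_Well_order card_of_Well_order]]
    assms unfolding set_le_cv_def by (simp add: Field_card_of)

text \<open>The degree bound is not implied by the other conjuncts: fminus truncates at 0.\<close>

definition admissible_factor ::
    "('a graph \<Rightarrow> ('a \<Rightarrow> 'c cardv) \<Rightarrow> bool) \<Rightarrow> 'a graph \<Rightarrow> ('a \<Rightarrow> 'c cardv) \<Rightarrow> 'a set set \<Rightarrow> bool"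
  where
  "admissible_factor P G f F \<longleftrightarrow> finite F \<and> F \<subseteq> snd G
     \<and> holds P (remove_edges G F) (fminus f F)
     \<and> (\<forall>v\<in>fst G. \<forall>n. f v = Fin n \<longrightarrow> card (inc F v) \<le> n)"

lemma admissible_factor_empty: "holds P G f \<Longrightarrow> admissible_factor P G f {}"
  unfolding admissible_factor_def by (simp add: fminus_empty remove_edges_empty inc_def)

lemma ffactor_if_admissible_factor:
  assumes "inC G f" "admissible_factor P G f F"
  shows "ffactor G f F"
  unfolding ffactor_def
proof (intro conjI ballI)
  show "F \<subseteq> snd G" using assms(2) unfolding admissible_factor_def by simp
next
  fix v assume v: "v \<in> fst G"
  have fin: "finite (inc F v)"
    using assms(2) unfolding admissible_factor_def by (simp add: finite_inc)
  show "set_le_cv (inc F v) (f v)"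
  proof (cases "f v")
    case (Fin n)
    then have "card (inc F v) \<le> n"
      using assms(2) v unfolding admissible_factor_def by blast
    then show ?thesis using Fin fin unfolding set_le_cv_def by simp
  next
    case (Inf S)
    have "valid_cardv (f v)" using assms(1) v unfolding inC_def by blast
    then have "infinite S" using Inf unfolding valid_cardv_def by simp
    then show ?thesis using Inf fin set_le_cv_Inf_if_finite by simp
  qed
qed

lemma admissible_factor_extend:
  assumes "hereditary P" "admissible_factor P G f F"
    and "x \<in> fst G" "pos (fminus f F x)"
  obtains e where "x \<in> e" "e \<notin> F" "admissible_factor P G f (insert e F)"
proof -
  have fin: "finite F" and sub: "F \<subseteq> snd G"
    and hP: "holds P (remove_edges G F) (fminus f F)"
    and bound: "\<forall>v\<in>fst G. \<forall>n. f v = Fin n \<longrightarrow> card (inc F v) \<le> n"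
    using assms(2) unfolding admissible_factor_def by blast+
  have "x \<in> fst (remove_edges G F)" using assms(3) by (simp add: remove_edges_def)
  then obtain y where py: "pos (fminus f F y)" and xy': "{x, y} \<in> snd (remove_edges G F)"
    and hP': "holds P (remove_edges (remove_edges G F) {{x, y}}) (fxy (fminus f F) x y)"
    using assms(1) hP assms(4) unfolding hereditary_def by blast
  have xy: "{x, y} \<in> snd G - F" using xy' by (simp add: remove_edges_def)
  have "card (inc (insert {x, y} F) v) \<le> n" if "v \<in> fst G" "f v = Fin n" for v n
  proof (cases "v \<in> {x, y}")
    case True
    then have "pos (fminus f F v)" using assms(4) py by blast
    then have "card (inc F v) < n" using that(2) unfolding pos_def fminus_def by simp
    moreover have "card (inc (insert {x, y} F) v) = Suc (card (inc F v))"
      using True card_inc_insert[OF fin] xy by simp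
    ultimately show ?thesis by simp
  next
    case False
    then have "card (inc (insert {x, y} F) v) = card (inc F v)"
      using card_inc_insert[OF fin] xy by simp
    then show ?thesis using bound that by simp
  qed
  moreover have "holds P (remove_edges G (insert {x, y} F)) (fminus f (insert {x, y} F))"
    using hP' xy unfolding remove_edges_insert[of G "{x, y}" F] by (simp add: fminus_insert[OF fin])
  ultimately have "admissible_factor P G f (insert {x, y} F)"
    using fin sub xy unfolding admissible_factor_def by simp
  with xy show thesis by (intro that[of "{x, y}"]) auto
qed

definition deficiency :: "('a \<Rightarrow> 'c cardv) \<Rightarrow> 'a set set \<Rightarrow> 'a \<Rightarrow> nat" where
  "deficiency f F x = (case f x of
     Fin n \<Rightarrow> n - card (inc F x)
   | Inf S \<Rightarrow> (if inc F x = {} then 1 else 0))"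

lemma pos_fminus_if_deficiency: "deficiency f F x > 0 \<Longrightarrow> pos (fminus f F x)"
  unfolding deficiency_def fminus_def pos_def by (auto split: cardv.splits)

lemma deficiency_insert_le:
  assumes "finite F"
  shows "deficiency f (insert e F) x \<le> deficiency f F x"
proof -
  have "inc F x \<subseteq> inc (insert e F) x" unfolding inc_def by auto
  moreover have "finite (inc (insert e F) x)" using assms by (simp add: finite_inc)
  ultimately show ?thesis
    unfolding deficiency_def by (auto split: cardv.split dest: card_mono)
qed

lemma deficiency_insert_less:
  assumes "finite F" "e \<notin> F" "x \<in> e" "deficiency f F x > 0"
  shows "deficiency f (insert e F) x < deficiency f F x"
proof -
  have "inc (insert e F) x \<noteq> {}" using assms(3) by (simp add: inc_insert)
  moreover have "card (inc (insert e F) x) = Suc (card (inc F x))"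
    using card_inc_insert[OF assms(1,2)] assms(3) by simp
  ultimately show ?thesis
    using assms(4) unfolding deficiency_def by (auto split: cardv.splits if_splits)
qed

lemma admissible_factor_saturate:
  assumes "hereditary P" "W \<subseteq> fst G" "finite W" "admissible_factor P G f F"
  shows "\<exists>F'. admissible_factor P G f F' \<and> (\<forall>x\<in>W. deficiency f F' x = 0)"
  using assms(4)
proof (induction "\<Sum>x\<in>W. deficiency f F x" arbitrary: F rule: less_induct)
  case less
  show ?case
  proof (cases "\<forall>x\<in>W. deficiency f F x = 0")
    case True
    then show ?thesis using less.prems by blast
  next
    case False
    then obtain x where x: "x \<in> W" "deficiency f F x > 0" by blast
    have fin: "finite F" using less.prems unfolding admissible_factor_def by simp
    have "x \<in> fst G" using x(1) assms(2) by blast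
    then obtain e where e: "x \<in> e" "e \<notin> F" and adm: "admissible_factor P G f (insert e F)"
      by (rule admissible_factor_extend[OF assms(1) less.prems _ pos_fminus_if_deficiency[OF x(2)]])
    have "(\<Sum>x\<in>W. deficiency f (insert e F) x) < (\<Sum>x\<in>W. deficiency f F x)"
    proof (rule sum_strict_mono_ex1[OF assms(3)])
      show "\<forall>z\<in>W. deficiency f (insert e F) z \<le> deficiency f F z"
        using deficiency_insert_le[OF fin] by blast
      show "\<exists>z\<in>W. deficiency f (insert e F) z < deficiency f F z"
        using x(1) deficiency_insert_less[OF fin e(2,1) x(2)] by blast
    qed
    then show ?thesis using less.hyps adm by blast
  qed
qed

lemma set_eq_cv_if_deficiency_zero:
  assumes "admissible_factor P G f F" "x \<in> fst G" "is_fin (f x)" "deficiency f F x = 0"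
  shows "set_eq_cv (inc F x) (f x)"
proof -
  obtain n where n: "f x = Fin n" using assms(3) unfolding is_fin_def by (cases "f x") auto
  have "finite (inc F x)" "card (inc F x) \<le> n"
    using assms(1,2) n unfolding admissible_factor_def by (simp_all add: finite_inc)
  then show ?thesis using assms(4) n unfolding deficiency_def set_eq_cv_def by simp
qed

lemma inc_nonempty_if_deficiency_zero:
  "\<not> is_fin (f x) \<Longrightarrow> deficiency f F x = 0 \<Longrightarrow> inc F x \<noteq> {}"
  unfolding is_fin_def deficiency_def by (auto split: cardv.splits)

theorem mainTheorem1:
  fixes P :: "'a graph \<Rightarrow> ('a \<Rightarrow> 'c cardv) \<Rightarrow> bool"
    and G :: "'a graph" and f :: "'a \<Rightarrow> 'c cardv" and W :: "'a set"
  assumes "hereditary P"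
    and "holds P G f"
    and "W \<subseteq> fst G" and "finite W"
  shows "\<exists>F. finite F \<and> ffactor G f F \<and> holds P (remove_edges G F) (fminus f F)
          \<and> (\<forall>x\<in>W. is_fin (f x) \<longrightarrow> set_eq_cv (inc F x) (f x))
          \<and> (\<forall>x\<in>W. \<not> is_fin (f x) \<longrightarrow> inc F x \<noteq> {})"
proof -
  obtain F where adm: "admissible_factor P G f F" and zero: "\<forall>x\<in>W. deficiency f F x = 0"
    using admissible_factor_saturate[OF assms(1,3,4) admissible_factor_empty[OF assms(2)]]
    by blast
  have "ffactor G f F"
    using ffactor_if_admissible_factor assms(2) adm unfolding holds_def by blast
  moreover have "\<forall>x\<in>W. is_fin (f x) \<longrightarrow> set_eq_cv (inc F x) (f x)"
    using set_eq_cv_if_deficiency_zero[OF adm] zero assms(3) by blast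
  moreover have "\<forall>x\<in>W. \<not> is_fin (f x) \<longrightarrow> inc F x \<noteq> {}"
    using zero by (metis inc_nonempty_if_deficiency_zero)
  ultimately show ?thesis using adm unfolding admissible_factor_def by blast
qed

end
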